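(* Let $A$ be a finite alphabet with $|A|=k$, and let $L\subseteq A^*$ be $n$-PT. Let $m=f_k(n)$. Then $I(L)$ is $(m+1)$-PT.
   Context: For words $u,v$, $u\sqsubseteq v$ (subword) means $u=a_1\cdots a_\ell$ with letters $a_i$ and $v=v_0a_1v_1\cdots a_\ell v_\ell$ for some words $v_i$. $u\perp v$ means $u\not\sqsubseteq v$ and $v\not\sqsubseteq u$. $I(L)=\{u\in A^*~|~\exists v\in L: u\perp v\}$. For $n\in\mathbb{N}$, $u\sim_n v$ iff $u$ and $v$ have exactly the same subwords of length at most $n$; $L$ is $n$-PT if it is a union of $\sim_n$-classes. The functions $f_k:\mathbb{N}\to\mathbb{N}$ ($k\geq1$) are defined by $f_1(n)=n$ and $f_{k+1}(n)=\max_{0\leq m\leq n}\bigl(m f_k(n+1-m)+m+f_k(n-m)\bigr)$. *)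

theory Defs
  imports Main "HOL-Library.Sublist"
begin

text \<open>Words over the alphabet A are lists over a (finite) type 'a; the subword
  ordering is the library's subseq (scattered subword embedding).\<close>

definition incomparable :: "'a list \<Rightarrow> 'a list \<Rightarrow> bool" where
  "incomparable u v \<longleftrightarrow> \<not> subseq u v \<and> \<not> subseq v u"

definition Inc :: "'a list set \<Rightarrow> 'a list set" where
  "Inc L = {u. \<exists>v\<in>L. incomparable u v}"

definition simn :: "nat \<Rightarrow> 'a list \<Rightarrow> 'a list \<Rightarrow> bool" where
  "simn n u v \<longleftrightarrow> (\<forall>w. length w \<le> n \<longrightarrow> (subseq w u \<longleftrightarrow> subseq w v))"

definition PT :: "nat \<Rightarrow> 'a list set \<Rightarrow> bool" where
  "PT n L \<longleftrightarrow> (\<forall>u v. simn n u v \<longrightarrow> (u \<in> L \<longleftrightarrow> v \<in> L))"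

text \<open>f k n for k \<ge> 1; the value at k = 0 is an irrelevant convention.\<close>
fun f :: "nat \<Rightarrow> nat \<Rightarrow> nat" where
  "f 0 n = n"
| "f (Suc 0) n = n"
| "f (Suc (Suc k)) n = Max ((\<lambda>m. m * f (Suc k) (n + 1 - m) + m + f (Suc k) (n - m)) ` {0..n})"

end

theory Submission
  imports Defs
begin

text \<open>First, every word v over a k-letter alphabet has a
  subword w with \<open>w \<sim>\<^sub>n v\<close> and of length at most f k n: cut v after the shortest prefix
  s a that contains all letters of v; then s uses at most k - 1 letters, and the rest R
  contains every word of some length l \<le> n over these letters, so it suffices to shorten s
  up to \<open>\<sim>\<^sub>n\<^sub>-\<^sub>l\<close> and R up to \<open>\<sim>\<^sub>n\<^sub>-\<^sub>1\<close>, which gives the recurrence for f.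

  Second, let m = f k n, \<open>u \<sim>\<^sub>m\<^sub>+\<^sub>1 u'\<close> and v \<in> L incomparable with u. When u or v is
  short, u' = u or u' is incomparable with v by counting lengths; when some short subword
  of u is missing in v, a long pumped copy of v in its \<open>\<sim>\<^sub>n\<close>-class does the job. Otherwise
  u, u' and v lie in one \<open>\<sim>\<^sub>n\<close>-class, which is contained in L. Since every class
  member longer than m has a letter whose deletion or repetition stays in the class, a word
  of length > m comparable with the whole class leaves room for only one class word of
  each greater length; so comparability with the whole class passes from u' to u, upward
  along the class and downward along \<open>\<sim>\<^sub>m\<^sub>+\<^sub>1\<close>-equivalent subwords, contradicting that u
  and v are incomparable.\<close>

section \<open>Subwords\<close>

lemma subseq_take [simp]: "subseq (take k xs) xs"
  by (simp add: take_is_prefix prefix_imp_subseq)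

lemma subseq_drop [simp]: "subseq (drop k xs) xs"
  by (simp add: suffix_drop suffix_imp_subseq)

lemma subseq_set: "subseq xs ys \<Longrightarrow> set xs \<subseteq> set ys"
  by (induction rule: list_emb.induct) auto

lemma subseq_delete_letter: "subseq (x @ y) (x @ a # y)"
  by (simp add: subseq_append' list_emb_Cons)

lemma subseq_delete_letter_obtain:
  assumes "subseq s w" "length s < length w"
  obtains x a y where "w = x @ a # y" "subseq s (x @ y)"
proof -
  have "\<exists>x a y. w = x @ a # y \<and> subseq s (x @ y)"
    using assms
  proof (induction rule: list_emb.induct)
    case (list_emb_Nil ys)
    then show ?case by (cases ys) (auto intro: exI[of _ "[]"])
  next
    case (list_emb_Cons xs ys y)
    then show ?case by (intro exI[of _ "[]"]) auto
  next
    case (list_emb_Cons2 x y xs ys)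
    then obtain x' a y' where "ys = x' @ a # y'" "subseq xs (x' @ y')" by auto
    then show ?case using list_emb_Cons2 by (intro exI[of _ "y # x'"]) auto
  qed
  then show thesis using that by (elim exE conjE)
qed

lemma subseq_length_Suc_obtain:
  assumes "subseq s t" "length t = Suc (length s)"
  obtains x a y where "t = x @ a # y" "s = x @ y"
proof -
  obtain x a y where "t = x @ a # y" "subseq s (x @ y)"
    using subseq_delete_letter_obtain[OF assms(1)] assms(2) by auto
  moreover then have "s = x @ y"
    using assms(2) by (intro subseq_same_length) auto
  ultimately show thesis using that by blast
qed

lemma subseq_interpolate:
  assumes "subseq s w" "length s \<le> l" "l \<le> length w"
  obtains z where "subseq s z" "subseq z w" "length z = l"
  using assms
proof (induction "length w - l" arbitrary: w thesis)
  case 0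
  then show ?case by (intro "0.prems"(1)[of w]) simp_all
next
  case (Suc d)
  then have "length s < length w" by linarith
  then obtain x a y where w: "w = x @ a # y" "subseq s (x @ y)"
    by (rule subseq_delete_letter_obtain[OF Suc.prems(2)])
  have "d = length (x @ y) - l" "l \<le> length (x @ y)"
    using Suc.hyps(2) Suc.prems(4) w(1) by auto
  then obtain z where "subseq s z" "subseq z (x @ y)" "length z = l"
    using Suc.hyps(1) w(2) Suc.prems(3) by blast
  moreover have "subseq (x @ y) w" using w(1) subseq_delete_letter by simp
  ultimately show ?case using Suc.prems(1) subseq_order.trans by blast
qed

lemma subseq_append_right:
  assumes "subseq (p @ c # q) (x @ z)" "\<not> subseq (p @ [c]) x"
  shows "subseq (c # q) z"
proof -
  obtain u1 u2 where u: "p @ c # q = u1 @ u2" "subseq u1 x" "subseq u2 z"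
    using assms(1) by (rule subseq_appendE)
  have "length u1 \<le> length p"
  proof (rule ccontr)
    assume "\<not> length u1 \<le> length p"
    then have "p @ [c] = take (Suc (length p)) u1"
      using arg_cong[OF u(1), of "take (Suc (length p))"] by simp
    then have "subseq (p @ [c]) u1" by simp
    then show False using u(2) assms(2) subseq_order.trans by blast
  qed
  then have "c # q = drop (length p - length u1) u2"
    using arg_cong[OF u(1), of "drop (length p)"] by simp
  then have "subseq (c # q) u2" by simp
  then show ?thesis using u(3) subseq_order.trans by blast
qed

lemma subseq_double_letter_cases:
  assumes "subseq t (x @ a # a # y)"
  obtains "subseq t (x @ a # y)"
    | t1 t2 where "t = t1 @ a # a # t2" "subseq t1 x" "subseq t2 y"
proof -
  have "subseq t ((x @ [a]) @ (a # y))" using assms by simp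
  then obtain t1 t2 where t: "t = t1 @ t2" "subseq t1 (x @ [a])" "subseq t2 (a # y)"
    by (rule subseq_appendE)
  show thesis
  proof (cases "subseq t1 x")
    case True
    then have "subseq t (x @ a # y)" unfolding t(1) using t(3) by (rule list_emb_append_mono)
    then show thesis by (rule that(1))
  next
    case False
    obtain s1 s2 where "t1 = s1 @ s2" "subseq s1 x" "subseq s2 [a]"
      using t(2) by (rule subseq_appendE)
    then obtain t1' where t1: "t1 = t1' @ [a]" "subseq t1' x"
      using False by (cases s2) (auto split: if_splits)
    show thesis
    proof (cases "subseq t2 y")
      case True
      then have "subseq (t1' @ a # t2) (x @ a # y)"
        using t1(2) by (intro list_emb_append_mono) simp_all
      then show thesis using t(1) t1(1) by (intro that(1)) simp
    next
      case False
      then obtain t2' where "t2 = a # t2'" "subseq t2' y"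
        using t(3) by (cases t2) (auto split: if_splits)
      then show thesis using t t1 by (intro that(2)[of t1' t2']) simp_all
    qed
  qed
qed

lemma append_eq_append_Cons_cases:
  assumes "x1 @ x2 = x @ a # y"
  obtains us where "x1 @ us = x" "x2 = us @ a # y"
    | us where "x1 = x @ a # us" "y = us @ x2"
proof -
  obtain us where "x1 @ us = x \<and> x2 = us @ a # y \<or> x1 = x @ us \<and> us @ x2 = a # y"
    using assms by (auto simp: append_eq_append_conv2)
  then show thesis
  proof (elim disjE conjE)
    assume "x1 = x @ us" "us @ x2 = a # y"
    then show thesis using that(1)[of "[]"] that(2) by (cases us) auto
  qed (rule that(1))
qed

lemma append_delete_letter_eq_left:
  assumes "x' = x @ us" "a # y = us @ b # y'" "x @ a # a # y = x' @ b # b # y'"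
  shows "x @ y = x' @ y'"
proof (cases us)
  case Nil
  then show ?thesis using assms by simp
next
  case (Cons c us')
  then have c: "c = a" "y = us' @ b # y'" using assms(2) by auto
  then have "(a # us' @ [b]) @ y' = (us' @ [b, b]) @ y'" using assms(1,3) Cons by simp
  then have "(a # us') @ [b] = (us' @ [b]) @ [b]" by simp
  then have "a # us' = us' @ [b]" by (rule append1_eq_conv[THEN iffD1, THEN conjunct1])
  then show ?thesis using assms(1) Cons c by simp
qed

lemma append_delete_letter_eq:
  assumes dup: "x @ a # a # y = x' @ b # b # y'" and "x @ a # y = x' @ b # y'"
  shows "x @ y = x' @ y'"
  using assms(2)
proof (cases rule: append_eq_append_Cons_cases)
  case (1 us)
  then show ?thesis using append_delete_letter_eq_left[of x' x us a y b y'] dup by simp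
next
  case (2 us)
  then show ?thesis using append_delete_letter_eq_left[of x x' "b # us" b y' a y] dup by simp
qed

section \<open>The congruences \<open>\<sim>\<^sub>n\<close>\<close>

lemma simn_refl [simp]: "simn N u u"
  by (simp add: simn_def)

lemma simn_sym: "simn N u v \<Longrightarrow> simn N v u"
  by (auto simp: simn_def)

lemma simn_trans: "simn N u v \<Longrightarrow> simn N v w \<Longrightarrow> simn N u w"
  by (auto simp: simn_def)

lemma simn_mono: "simn N u v \<Longrightarrow> M \<le> N \<Longrightarrow> simn M u v"
  by (auto simp: simn_def)

lemma simnD: "simn N u v \<Longrightarrow> length w \<le> N \<Longrightarrow> subseq w u \<Longrightarrow> subseq w v"
  by (auto simp: simn_def)

lemma simn_squeeze:
  assumes "\<And>t. length t \<le> N \<Longrightarrow> subseq t u \<Longrightarrow> subseq t v"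
    and "subseq w u" "simn N w v"
  shows "simn N u v"
  using assms subseq_order.trans unfolding simn_def by blast

lemma simn_between:
  assumes "subseq w z" "subseq z u" "simn N w u"
  shows "simn N z u"
  using assms(2) by (intro simn_squeeze[OF _ assms(1) simn_trans[OF assms(3)]])
    (auto intro: subseq_order.trans simp: simn_def)

lemma simn_short_eq:
  assumes "simn N u u'" "length u < N"
  shows "u' = u"
proof -
  have "subseq u u'" using simnD[OF assms(1)] assms(2) by simp
  moreover have "\<not> length u < length u'"
  proof
    assume "length u < length u'"
    then have "subseq (take (Suc (length u)) u') u"
      using simnD[OF simn_sym[OF assms(1)], of "take (Suc (length u)) u'"] assms(2) by simp
    then show False using \<open>length u < length u'\<close> by (auto dest: list_emb_length)
  qed
  ultimately show ?thesis using list_emb_length subseq_same_length by (metis le_neq_implies_less)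
qed

lemma simn_length_ge: "simn N u u' \<Longrightarrow> N \<le> length u \<Longrightarrow> N \<le> length u'"
  using simn_short_eq[OF simn_sym] by (metis not_le)

lemma simn_incomparable:
  assumes "simn N u u'" "length w \<le> N" "N \<le> length u'" "\<not> subseq w u"
  shows "incomparable u' w"
proof -
  have "\<not> subseq w u'" using simnD[OF simn_sym[OF assms(1)] assms(2)] assms(4) by blast
  moreover have "\<not> subseq u' w"
    using assms(2,3) \<open>\<not> subseq w u'\<close> list_emb_length subseq_same_length by (metis le_antisym le_trans)
  ultimately show ?thesis by (simp add: incomparable_def)
qed

lemma simn_duplicate_letter:
  assumes "simn n (x @ y) (x @ a # y)"
  shows "simn n (x @ a # a # y) (x @ a # y)"
  unfolding simn_def
proof (intro allI impI iffI)
  fix t assume "subseq t (x @ a # y)"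
  moreover have "subseq (x @ a # y) (x @ a # a # y)"
    using subseq_delete_letter[of "x @ [a]" y a] by simp
  ultimately show "subseq t (x @ a # a # y)" by (rule subseq_order.trans)
next
  fix t assume len: "length t \<le> n" and t: "subseq t (x @ a # a # y)"
  from t show "subseq t (x @ a # y)"
  proof (cases rule: subseq_double_letter_cases)
    case (2 t1 t2)
    show ?thesis
    proof (cases "subseq (t1 @ [a]) x \<or> subseq (a # t2) y")
      case True
      then show ?thesis
      proof
        assume "subseq (t1 @ [a]) x"
        then have "subseq ((t1 @ [a]) @ a # t2) (x @ a # y)"
          using 2(3) by (intro list_emb_append_mono) simp_all
        then show ?thesis using 2(1) by simp
      next
        assume "subseq (a # t2) y"
        then have "subseq (t1 @ a # a # t2) (x @ a # y)"
          using 2(2) by (intro list_emb_append_mono) simp_all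
        then show ?thesis using 2(1) by simp
      qed
    next
      case False
      have "subseq (t1 @ a # t2) (x @ a # y)"
        using 2 by (intro list_emb_append_mono) simp_all
      then have "subseq (t1 @ a # t2) (x @ y)"
        using simnD[OF simn_sym[OF assms]] len 2(1) by simp
      then have "subseq (a # t2) y" using False by (intro subseq_append_right) auto
      then show ?thesis using False by simp
    qed
  qed
qed

lemma simn_replicate_letter:
  assumes "simn n (x @ y) (x @ a # y)"
  shows "simn n (x @ replicate j a @ y) (x @ a # y)"
proof -
  have "simn n (x @ replicate j a @ y) (x @ a # y) \<and> simn n (x @ replicate j a @ a # y) (x @ a # y)"
  proof (induction j)
    case 0
    then show ?case using assms by simp
  next
    case (Suc j)
    let ?x = "x @ replicate j a"
    have IH: "simn n (?x @ y) (x @ a # y)" "simn n (?x @ a # y) (x @ a # y)"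
      using Suc.IH by simp_all
    then have "simn n (?x @ y) (?x @ a # y)" using simn_sym simn_trans by blast
    then have "simn n (?x @ a # a # y) (?x @ a # y)" by (rule simn_duplicate_letter)
    then have "simn n (?x @ a # a # y) (x @ a # y)" using IH(2) simn_trans by blast
    moreover have "x @ replicate (Suc j) a @ y = ?x @ a # y"
      "x @ replicate (Suc j) a @ a # y = ?x @ a # a # y"
      by (simp_all add: replicate_app_Cons_same)
    ultimately show ?case using IH(2) by simp
  qed
  then show ?thesis by simp
qed

section \<open>Short representatives\<close>

text \<open>The recurrence of f started from the bound 0 for the empty alphabet instead of the
  value f 0 n = n; both starting values give the same f 1.\<close>
definition rep_bound :: "nat \<Rightarrow> nat \<Rightarrow> nat" where
  "rep_bound k n = (if k = 0 then 0 else f k n)"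

lemma rep_bound_Suc_ge:
  assumes "l \<le> n"
  shows "l * rep_bound k (n + 1 - l) + l + rep_bound k (n - l) \<le> rep_bound (Suc k) n"
proof (cases k)
  case 0
  then show ?thesis using assms by (simp add: rep_bound_def)
next
  case (Suc k')
  then show ?thesis using assms by (auto simp: rep_bound_def intro!: Max_ge)
qed

lemma self_le_f: "1 \<le> k \<Longrightarrow> n \<le> f k n"
  using rep_bound_Suc_ge[of n n "k - 1"] by (simp add: rep_bound_def)

definition contains_all_words :: "'a set \<Rightarrow> nat \<Rightarrow> 'a list \<Rightarrow> bool" where
  "contains_all_words B l v \<longleftrightarrow> (\<forall>u. set u \<subseteq> B \<longrightarrow> length u \<le> l \<longrightarrow> subseq u v)"

lemma contains_all_words_Cons:
  assumes "contains_all_words B l R" "B \<subseteq> insert a (set s)"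
  shows "contains_all_words B (Suc l) (s @ a # R)"
  unfolding contains_all_words_def
proof (intro allI impI)
  fix u assume u: "set u \<subseteq> B" "length u \<le> Suc l"
  show "subseq u (s @ a # R)"
  proof (cases u)
    case (Cons c u')
    then have "subseq [c] (s @ [a])" using u(1) assms(2) by (auto simp: subseq_singleton_left)
    moreover have "subseq u' R" using assms(1) u Cons by (simp add: contains_all_words_def)
    ultimately have "subseq ([c] @ u') ((s @ [a]) @ R)" by (rule list_emb_append_mono)
    then show ?thesis using Cons by simp
  qed simp
qed

lemma shortest_covering_prefix:
  assumes "B \<subseteq> set v" "B \<noteq> {}"
  obtains s a R where "v = s @ a # R" "a \<notin> set s" "B \<subseteq> insert a (set s)"
proof -
  have "\<exists>s a R. v = s @ a # R \<and> a \<notin> set s \<and> B \<subseteq> insert a (set s)"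
    using assms
  proof (induction v rule: rev_induct)
    case (snoc c v)
    show ?case
    proof (cases "B \<subseteq> set v")
      case True
      then obtain s a R where "v = s @ a # R" "a \<notin> set s" "B \<subseteq> insert a (set s)"
        using snoc by auto
      then show ?thesis by (intro exI[of _ s] exI[of _ a] exI[of _ "R @ [c]"]) auto
    next
      case False
      then show ?thesis using snoc.prems by (intro exI[of _ v] exI[of _ c] exI[of _ "[]"]) auto
    qed
  qed simp
  then show thesis using that by (elim exE conjE)
qed

lemma take_boundary:
  assumes "P []" "\<not> P (take l t)"
  obtains j where "j < length t" "j < l" "P (take j t)" "\<not> P (take (Suc j) t)"
  using assms
proof (induction l arbitrary: thesis)
  case (Suc l)
  show ?case
  proof (cases "P (take l t)")
    case True
    have "l < length t"
    proof (rule ccontr)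
      assume "\<not> l < length t"
      then show False using True Suc.prems(3) by simp
    qed
    then show ?thesis using Suc.prems(1)[of l] True Suc.prems(3) by simp
  next
    case False
    obtain j where "j < length t" "j < l" "P (take j t)" "\<not> P (take (Suc j) t)"
      using Suc.IH[OF _ Suc.prems(2) False] by blast
    then show ?thesis using Suc.prems(1)[of j] by simp
  qed
qed simp

text \<open>Cut t after its longest prefix embeddable into s: if that prefix is long, the rest is
  covered by the universality of wR; otherwise the rest, starting with the next letter,
  embeds into a R and has length below n.\<close>
lemma subseq_compress:
  assumes "set R \<subseteq> insert a (set s)"
    and "\<And>t. length t \<le> p \<Longrightarrow> subseq t s \<Longrightarrow> subseq t ws"
    and "\<And>t. length t \<le> n - 1 \<Longrightarrow> subseq t R \<Longrightarrow> subseq t wR"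
    and "contains_all_words (insert a (set s)) q wR" "n \<le> p + q"
    and "length t \<le> n" "subseq t (s @ a # R)"
  shows "subseq t (ws @ a # wR)"
proof -
  have t_letters: "set t \<subseteq> insert a (set s)"
    using subseq_set[OF assms(7)] assms(1) by auto
  have drop_a: "subseq (ws @ wR) (ws @ a # wR)" by (rule subseq_delete_letter)
  show ?thesis
  proof (cases "subseq (take (length t - q) t) s")
    case True
    then have "subseq (take (length t - q) t) ws"
      by (rule assms(2)[rotated]) (use assms(5,6) in simp)
    moreover have "set (drop (length t - q) t) \<subseteq> insert a (set s)"
      using t_letters set_drop_subset by fast
    then have "subseq (drop (length t - q) t) wR"
      using assms(4) unfolding contains_all_words_def by simp
    ultimately have "subseq (take (length t - q) t @ drop (length t - q) t) (ws @ wR)"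
      by (rule list_emb_append_mono)
    then have "subseq t (ws @ wR)" by simp
    then show ?thesis using drop_a subseq_order.trans by blast
  next
    case False
    obtain j where j: "j < length t" "j < length t - q" "subseq (take j t) s"
      "\<not> subseq (take (Suc j) t) s"
      by (rule take_boundary[where P = "\<lambda>u. subseq u s", OF _ False]) simp_all
    let ?c = "t ! j" and ?rest = "drop (Suc j) t"
    have t_split: "t = take j t @ ?c # ?rest" using j(1) by (simp add: id_take_nth_drop)
    have prefix: "subseq (take j t) ws"
      by (rule assms(2)[OF _ j(3)]) (use assms(5,6) j(2) in simp)
    have "\<not> subseq (take j t @ [?c]) s" using j(1,4) by (simp add: take_Suc_conv_app_nth)
    moreover have "subseq (take j t @ ?c # ?rest) (s @ a # R)" using assms(7) t_split by simp
    ultimately have rest: "subseq (?c # ?rest) (a # R)" by (rule subseq_append_right[rotated])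
    show ?thesis
    proof (cases "?c = a")
      case True
      then have "subseq ?rest wR"
        using rest by (intro assms(3)) (use assms(6) in simp_all)
      then have "subseq (take j t @ ?c # ?rest) (ws @ a # wR)"
        using prefix True by (intro list_emb_append_mono) simp_all
      then show ?thesis using t_split by simp
    next
      case False
      have "?c \<in> set s" using False t_letters j(1) nth_mem by blast
      have "j \<noteq> 0"
      proof
        assume "j = 0"
        then have "take (Suc j) t = [?c]" using j(1) by (simp add: take_Suc_conv_app_nth)
        then show False using j(4) \<open>?c \<in> set s\<close> by (simp add: subseq_singleton_left)
      qed
      then have "subseq (?c # ?rest) wR"
        using rest False by (intro assms(3)) (use assms(6) j(1) in simp_all)
      then have "subseq (take j t @ ?c # ?rest) (ws @ wR)"
        using prefix by (intro list_emb_append_mono)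
      then have "subseq t (ws @ wR)" using t_split by simp
      then show ?thesis using drop_a subseq_order.trans by blast
    qed
  qed
qed

lemma simn_compress:
  assumes "set R \<subseteq> insert a (set s)"
    and "subseq ws s" "simn p ws s" "subseq wR R" "simn (n - 1) wR R"
    and "contains_all_words (insert a (set s)) q wR" "n \<le> p + q"
  shows "simn n (ws @ a # wR) (s @ a # R)"
  unfolding simn_def
proof (intro allI impI iffI)
  fix t assume "subseq t (ws @ a # wR)"
  moreover have "subseq (ws @ a # wR) (s @ a # R)"
    using assms(2,4) by (intro list_emb_append_mono) simp_all
  ultimately show "subseq t (s @ a # R)" by (rule subseq_order.trans)
next
  fix t assume "length t \<le> n" "subseq t (s @ a # R)"
  then show "subseq t (ws @ a # wR)"
    using subseq_compress[OF assms(1) simnD[OF simn_sym[OF assms(3)]]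
          simnD[OF simn_sym[OF assms(5)]] assms(6,7)] by simp
qed

lemma contains_all_words_simn:
  assumes "contains_all_words B l v" "simn N w v" "l \<le> N"
  shows "contains_all_words B l w"
  using assms simnD[OF simn_sym[OF assms(2)]] unfolding contains_all_words_def by auto

definition has_short_simn_subword :: "nat \<Rightarrow> nat \<Rightarrow> 'a list \<Rightarrow> bool" where
  "has_short_simn_subword n b v \<longleftrightarrow> (\<exists>w. subseq w v \<and> simn n w v \<and> length w \<le> b)"

lemma has_short_simn_subwordI:
  "subseq w v \<Longrightarrow> simn n w v \<Longrightarrow> length w \<le> b \<Longrightarrow> has_short_simn_subword n b v"
  unfolding has_short_simn_subword_def by (intro exI[of _ w] conjI)

lemma has_short_simn_subwordE:
  assumes "has_short_simn_subword n b v"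
  obtains w where "subseq w v" "simn n w v" "length w \<le> b"
  using assms that unfolding has_short_simn_subword_def by (elim exE conjE)

lemma has_short_simn_subword_mono:
  assumes "has_short_simn_subword n b v" "b \<le> b'"
  shows "has_short_simn_subword n b' v"
  using assms(1)
proof (rule has_short_simn_subwordE)
  fix w assume "subseq w v" "simn n w v" "length w \<le> b"
  then show ?thesis using assms(2) by (intro has_short_simn_subwordI) auto
qed

lemma has_short_simn_subword_0: "has_short_simn_subword 0 b v"
  by (rule has_short_simn_subwordI[of "[]"]) (simp_all add: simn_def)

lemma has_short_simn_subword_Cons:
  assumes "set R \<subseteq> insert a (set s)" "contains_all_words (insert a (set s)) l R" "l < n"
    and "has_short_simn_subword (n - l) b\<^sub>s s" "has_short_simn_subword (n - 1) b\<^sub>R R"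
  shows "has_short_simn_subword n (b\<^sub>s + 1 + b\<^sub>R) (s @ a # R)"
proof -
  obtain ws where ws: "subseq ws s" "simn (n - l) ws s" "length ws \<le> b\<^sub>s"
    using assms(4) by (rule has_short_simn_subwordE)
  obtain wR where wR: "subseq wR R" "simn (n - 1) wR R" "length wR \<le> b\<^sub>R"
    using assms(5) by (rule has_short_simn_subwordE)
  have "contains_all_words (insert a (set s)) l wR"
    using contains_all_words_simn[OF assms(2) wR(2)] assms(3) by simp
  then have "simn n (ws @ a # wR) (s @ a # R)"
    using assms(1,3) by (intro simn_compress[OF _ ws(1,2) wR(1,2)]) auto
  moreover have "subseq (ws @ a # wR) (s @ a # R)"
    using ws(1) wR(1) by (intro list_emb_append_mono) simp_all
  moreover have "length (ws @ a # wR) \<le> b\<^sub>s + 1 + b\<^sub>R" using ws(3) wR(3) by simp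
  ultimately show ?thesis by (intro has_short_simn_subwordI)
qed

text \<open>The induction on the length of v behind the bound f: cutting v = s a R after the
  shortest prefix using every letter of B, s uses only k letters, while R contains all
  words of length l over B for some l \<le> n, so the representative of s only has to be
  accurate up to length n - l.\<close>
lemma has_short_simn_subword_step:
  fixes B :: "'a set"
  assumes IH: "\<And>(B' :: 'a set) v n. finite B' \<Longrightarrow> card B' \<le> k \<Longrightarrow> set v \<subseteq> B' \<Longrightarrow>
      has_short_simn_subword n (rep_bound k n) v"
    and B: "finite B" "card B = Suc k"
  shows "set v \<subseteq> B \<Longrightarrow> \<exists>l\<le>n. contains_all_words B l v \<and>
      has_short_simn_subword n (l * rep_bound k (n + 1 - l) + l + rep_bound k (n - l)) v"
proof (induction "length v" arbitrary: v n rule: less_induct)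
  case less
  consider "set v \<noteq> B" | "n = 0" | n' where "set v = B" "n = Suc n'"
    by (metis nat.exhaust)
  then show ?case
  proof cases
    case 1
    then have "set v \<subset> B" using less.prems by (simp add: psubset_eq)
    then have "card (set v) < card B" by (rule psubset_card_mono[OF B(1)])
    then have "has_short_simn_subword n (rep_bound k n) v"
      using IH[of "set v" v n] B(2) by simp
    then show ?thesis by (intro exI[of _ 0]) (simp add: contains_all_words_def)
  next
    case 2
    then show ?thesis
      using has_short_simn_subword_0 by (intro exI[of _ 0]) (simp add: contains_all_words_def)
  next
    case 3
    have "B \<subseteq> set v" "B \<noteq> {}" using 3(1) B(2) by auto
    then obtain s a R where v: "v = s @ a # R" "a \<notin> set s" "B \<subseteq> insert a (set s)"
      by (rule shortest_covering_prefix)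
    have B_eq: "B = insert a (set s)" using v 3(1) by auto
    obtain l where l: "l \<le> n'" "contains_all_words B l R"
      "has_short_simn_subword n' (l * rep_bound k (n' + 1 - l) + l + rep_bound k (n' - l)) R"
      using less.hyps[of R n'] v(1) 3(1) by auto
    have "card (set s) = k" using B(2) B_eq v(2) by simp
    then have "has_short_simn_subword (n - l) (rep_bound k (n - l)) s"
      using IH[of "set s" s "n - l"] by simp
    then have "has_short_simn_subword n
        (rep_bound k (n - l) + 1 + (l * rep_bound k (n' + 1 - l) + l + rep_bound k (n' - l))) v"
      unfolding v(1) using l 3 v(1) B_eq by (intro has_short_simn_subword_Cons) auto
    then have "has_short_simn_subword n
        (Suc l * rep_bound k (n + 1 - Suc l) + Suc l + rep_bound k (n - Suc l)) v"
      by (rule has_short_simn_subword_mono) (use l(1) 3(2) in \<open>simp add: Suc_diff_le\<close>)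
    moreover have "contains_all_words B (Suc l) v"
      unfolding v(1) using l(2) v(3) by (rule contains_all_words_Cons)
    ultimately show ?thesis using l(1) 3(2) by (intro exI[of _ "Suc l"]) auto
  qed
qed

lemma has_short_simn_subword_card:
  "finite B \<Longrightarrow> card B \<le> k \<Longrightarrow> set v \<subseteq> B \<Longrightarrow> has_short_simn_subword n (rep_bound k n) v"
proof (induction k arbitrary: B v n)
  case 0
  then have "v = []" by simp
  then show ?case by (intro has_short_simn_subwordI[of "[]"]) (simp_all add: rep_bound_def)
next
  case (Suc k)
  show ?case
  proof (cases "card B \<le> k")
    case True
    then have "has_short_simn_subword n (rep_bound k n) v" using Suc by blast
    then show ?thesis
      by (rule has_short_simn_subword_mono) (use rep_bound_Suc_ge[of 0 n k] in simp)
  next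
    case False
    have "\<exists>l\<le>n. contains_all_words B l v \<and>
        has_short_simn_subword n (l * rep_bound k (n + 1 - l) + l + rep_bound k (n - l)) v"
      by (rule has_short_simn_subword_step, erule (2) Suc.IH) (use Suc.prems False in simp_all)
    then show ?thesis using rep_bound_Suc_ge has_short_simn_subword_mono by blast
  qed
qed

section \<open>Words comparable with a whole class\<close>

text \<open>The word v only fixes the \<open>\<sim>\<^sub>n\<close>-class under study.\<close>
locale short_representatives =
  fixes n m :: nat and v :: "'a list"
  assumes short_representative: "\<And>z :: 'a list. has_short_simn_subword n m z"
    and le_m: "n \<le> m"
begin

lemma obtain_redundant_letter:
  fixes z :: "'a list"
  assumes "m < length z"
  obtains x a y where "z = x @ a # y" "simn n (x @ y) z"
proof -
  obtain w where w: "subseq w z" "simn n w z" "length w \<le> m"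
    using short_representative[of z] by (rule has_short_simn_subwordE)
  then have "length w < length z" using assms by simp
  then obtain x a y where z: "z = x @ a # y" and xy: "subseq w (x @ y)"
    by (rule subseq_delete_letter_obtain[OF w(1)])
  have "subseq (x @ y) z" using z subseq_delete_letter by simp
  then have "simn n (x @ y) z" by (rule simn_between[OF xy _ w(2)])
  then show thesis by (rule that[OF z])
qed

text \<open>A redundant letter can be repeated at will (pumping).\<close>
lemma obtain_simn_superword:
  fixes z :: "'a list"
  assumes "m < length z" "length z \<le> l"
  obtains z' where "subseq z z'" "length z' = l" "simn n z' z"
proof -
  obtain x a y where z: "z = x @ a # y" and xy: "simn n (x @ y) z"
    by (rule obtain_redundant_letter[OF assms(1)])
  define j where "j = l - length z"
  have "x @ replicate (Suc j) a @ y = x @ replicate j a @ a # y"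
    by (simp add: replicate_app_Cons_same)
  then have "simn n (x @ replicate j a @ a # y) (x @ a # y)"
    using simn_replicate_letter[of n x y a "Suc j"] xy z by simp
  then have "simn n (x @ replicate j a @ a # y) z" using z by simp
  moreover have "subseq z (x @ replicate j a @ a # y)"
    unfolding z by (simp add: subseq_append' subseq_drop_many)
  moreover have "length (x @ replicate j a @ a # y) = l" using assms(2) z j_def by simp
  ultimately show thesis by (intro that)
qed

lemma obtain_simn_subword:
  fixes z :: "'a list"
  assumes "m \<le> l" "l \<le> length z"
  obtains z' where "subseq z' z" "length z' = l" "simn n z' z"
proof -
  obtain w where w: "subseq w z" "simn n w z" "length w \<le> m"
    using short_representative[of z] by (rule has_short_simn_subwordE)
  have "length w \<le> l" using w(3) assms(1) by simp
  then obtain z' where z': "subseq w z'" "subseq z' z" "length z' = l"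
    by (rule subseq_interpolate[OF w(1) _ assms(2)])
  show thesis by (rule that[OF z'(2,3) simn_between[OF z'(1,2) w(2)]])
qed

definition comparable_to_class :: "'a list \<Rightarrow> bool" where
  "comparable_to_class w \<longleftrightarrow> (\<forall>z. simn n z v \<longrightarrow> subseq z w \<or> subseq w z)"

lemma comparable_shorter_subseq:
  assumes "comparable_to_class w" "simn n z v" "length z \<le> length w"
  shows "subseq z w"
proof -
  have "subseq z w \<or> subseq w z" using assms(1,2) unfolding comparable_to_class_def by simp
  moreover have "w = z" if "subseq w z"
    using subseq_same_length[OF that] list_emb_length[OF that] assms(3) by simp
  ultimately show ?thesis by auto
qed

lemma comparable_longer_superseq:
  assumes "comparable_to_class w" "simn n z v" "length w \<le> length z"
  shows "subseq w z"
proof -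
  have "subseq z w \<or> subseq w z" using assms(1,2) unfolding comparable_to_class_def by simp
  moreover have "z = w" if "subseq z w"
    using subseq_same_length[OF that] list_emb_length[OF that] assms(3) by simp
  ultimately show ?thesis by auto
qed

lemma comparable_same_length_eq:
  assumes "comparable_to_class w" "simn n z v" "length z = length w"
  shows "z = w"
  using comparable_shorter_subseq[OF assms(1,2)] assms(3) subseq_same_length by simp

text \<open>Deleting from t the inserted letter b, or the letter a next to it, yields a word
  between x y and t, hence a word of the class of the length of w, hence w itself.\<close>
lemma comparable_insert_letter_eq:
  assumes K: "comparable_to_class w" and w: "w = x @ a # y" and xy: "simn n (x @ y) v"
    and t: "simn n t v" "length t = Suc (length w)"
  shows "t = x @ a # a # y"
proof -
  have "subseq w t" using comparable_longer_superseq[OF K t(1)] t(2) by simp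
  then obtain x1 b x2 where t_eq: "t = x1 @ b # x2" and w_eq: "w = x1 @ x2"
    using t(2) by (rule subseq_length_Suc_obtain)
  have xy_t: "simn n (x @ y) t" using simn_trans[OF xy simn_sym[OF t(1)]] .
  have eq_w: "t' = w" if "subseq (x @ y) t'" "subseq t' t" "length t' = length w" for t'
    using comparable_same_length_eq[OF K simn_trans[OF simn_between[OF that(1,2) xy_t] t(1)]]
      that(3) .
  from w_eq w have "x1 @ x2 = x @ a # y" by simp
  then show ?thesis
  proof (cases rule: append_eq_append_Cons_cases)
    case (1 us)
    have "x1 @ b # us @ y = w"
    proof (rule eq_w)
      show "subseq (x @ y) (x1 @ b # us @ y)"
        using subseq_delete_letter[of x1 "us @ y" b] 1(1) by auto
      show "subseq (x1 @ b # us @ y) t"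
        using subseq_delete_letter[of "x1 @ b # us" y a] t_eq 1(2) by simp
    qed (use w 1(1) in auto)
    then have "(b # us) @ y = (us @ [a]) @ y" using w 1(1) by auto
    then have "b # us = us @ [a]" by (simp only: append_same_eq)
    then show ?thesis using t_eq 1 by (metis append.assoc append_Cons append_Nil)
  next
    case (2 us)
    have "x @ us @ b # x2 = w"
    proof (rule eq_w)
      show "subseq (x @ y) (x @ us @ b # x2)"
        using subseq_delete_letter[of "x @ us" x2 b] 2(2) by simp
      show "subseq (x @ us @ b # x2) t"
        using subseq_delete_letter[of x "us @ b # x2" a] t_eq 2(1) by simp
    qed (use w 2(2) in auto)
    then have "(us @ [b]) @ x2 = (a # us) @ x2" using w 2(2) by auto
    then have "us @ [b] = a # us" by (simp only: append_same_eq)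
    then show ?thesis using t_eq 2 by (metis append.assoc append_Cons append_Nil)
  qed
qed

lemma comparable_to_class_Suc:
  assumes K: "comparable_to_class w" "simn n w v" "m < length w"
    and z: "simn n z v" "length z = Suc (length w)"
  shows "comparable_to_class z"
proof -
  obtain x a y where w: "w = x @ a # y" and "simn n (x @ y) w"
    by (rule obtain_redundant_letter[OF K(3)])
  then have xy: "simn n (x @ y) v" using simn_trans K(2) by blast
  have unique: "t = x @ a # a # y" if "simn n t v" "length t = Suc (length w)" for t
    by (rule comparable_insert_letter_eq[OF K(1) w xy that])
  show ?thesis unfolding comparable_to_class_def
  proof (intro allI impI)
    fix t assume t: "simn n t v"
    show "subseq t z \<or> subseq z t"
    proof (cases "length t \<le> length w")
      case True
      have "subseq t w" by (rule comparable_shorter_subseq[OF K(1) t True])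
      moreover have "subseq w z" using comparable_longer_superseq[OF K(1) z(1)] z(2) by simp
      ultimately have "subseq t z" by (rule subseq_order.trans)
      then show ?thesis ..
    next
      case False
      then have "m \<le> length z" "length z \<le> length t" using K(3) z(2) by simp_all
      then obtain t' where t': "subseq t' t" "length t' = length z" "simn n t' t"
        by (rule obtain_simn_subword)
      have "t' = z" using unique[OF simn_trans[OF t'(3) t]] unique[OF z] t'(2) z(2) by simp
      then show ?thesis using t'(1) by simp
    qed
  qed
qed

lemma comparable_to_class_upward:
  assumes K: "comparable_to_class w" "simn n w v" "m < length w"
    and z: "simn n z v" "length w \<le> length z"
  shows "comparable_to_class z"
  using z
proof (induction "length z - length w" arbitrary: z)
  case 0
  then have "length z = length w" by linarith
  then have "z = w" by (rule comparable_same_length_eq[OF K(1) "0.prems"(1)])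
  then show ?case using K(1) by simp
next
  case (Suc d)
  have len: "m \<le> length z - 1" "length z - 1 \<le> length z" "length w < length z"
    using Suc.hyps(2) K(3) by auto
  obtain z' where z': "subseq z' z" "length z' = length z - 1" "simn n z' z"
    using len(1,2) by (rule obtain_simn_subword)
  have z'v: "simn n z' v" using simn_trans[OF z'(3) Suc.prems(1)] .
  have "d = length z' - length w" "length w \<le> length z'" using Suc.hyps(2) z'(2) len by auto
  then have "comparable_to_class z'" by (rule Suc.hyps(1)[OF _ z'v])
  moreover have "m < length z'" "length z = Suc (length z')" using len z'(2) K(3) by auto
  ultimately show ?case by (rule comparable_to_class_Suc[OF _ z'v _ Suc.prems(1)])
qed

lemma comparable_delete_letter_unique:
  assumes K: "comparable_to_class w" "simn n w v" and w: "w = x @ a # y"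
    and xy: "simn n (x @ y) w"
    and z: "simn n z v" "subseq z w" "length z = length (x @ y)"
  shows "z = x @ y"
proof -
  obtain x' b y' where w': "w = x' @ b # y'" and z_eq: "z = x' @ y'"
    using z(2) by (rule subseq_length_Suc_obtain) (use w z(3) in simp)
  have "simn n (x @ a # a # y) w" using simn_duplicate_letter xy w by simp
  then have "simn n (x @ a # a # y) v" using simn_trans K(2) by blast
  then have "x @ a # a # y = x' @ b # b # y'"
    using comparable_insert_letter_eq[OF K(1) w'] z(1) z_eq w by simp
  moreover have "x @ a # y = x' @ b # y'" using w w' by simp
  ultimately have "x @ y = x' @ y'" by (rule append_delete_letter_eq)
  then show ?thesis using z_eq by simp
qed

text \<open>Subwords of w of length at most m + 1 are subwords of x y; longer ones are
  pumped up to the length of x y, where the class has only the word x y below w.\<close>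
lemma comparable_to_class_delete_letter:
  assumes K: "comparable_to_class w" "simn n w v" and w: "w = x @ a # y"
    and xy: "simn (Suc m) (x @ y) w" "m < length (x @ y)"
  shows "comparable_to_class (x @ y)"
  unfolding comparable_to_class_def
proof (intro allI impI)
  have xy_n: "simn n (x @ y) w" using simn_mono[OF xy(1)] le_m by simp
  fix t assume t: "simn n t v"
  show "subseq t (x @ y) \<or> subseq (x @ y) t"
  proof (cases "length w \<le> length t")
    case True
    have "subseq (x @ y) w" using w subseq_delete_letter by simp
    moreover have "subseq w t" by (rule comparable_longer_superseq[OF K(1) t True])
    ultimately have "subseq (x @ y) t" by (rule subseq_order.trans)
    then show ?thesis ..
  next
    case t_short: False
    then have tw: "subseq t w" using comparable_shorter_subseq[OF K(1) t] by simp
    show ?thesis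
    proof (cases "length t \<le> Suc m")
      case True
      then show ?thesis using simnD[OF simn_sym[OF xy(1)] True tw] by simp
    next
      case False
      then have "m < length t" "length t \<le> length (x @ y)" using t_short w by simp_all
      then obtain t' where t': "subseq t t'" "length t' = length (x @ y)" "simn n t' t"
        by (rule obtain_simn_superword)
      have t'v: "simn n t' v" using simn_trans[OF t'(3) t] .
      have "subseq t' w" using comparable_shorter_subseq[OF K(1) t'v] t'(2) w by simp
      then have "t' = x @ y" using comparable_delete_letter_unique[OF K w xy_n t'v _ t'(2)] by simp
      then show ?thesis using t'(1) by simp
    qed
  qed
qed

lemma comparable_to_class_downward:
  assumes "subseq s w" "simn (Suc m) s w" "comparable_to_class w" "simn n w v" "m < length s"
  shows "comparable_to_class s"
  using assms(1-4)
proof (induction "length w - length s" arbitrary: w)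
  case 0
  then have "length s = length w" using list_emb_length[OF "0.prems"(1)] by linarith
  then have "s = w" by (rule subseq_same_length[OF "0.prems"(1)])
  then show ?case using "0.prems"(3) by simp
next
  case (Suc d)
  then have "length s < length w" by simp
  then obtain x a y where w: "w = x @ a # y" and sxy: "subseq s (x @ y)"
    by (rule subseq_delete_letter_obtain[OF Suc.prems(1)])
  have "subseq (x @ y) w" using w subseq_delete_letter by simp
  then have h: "simn (Suc m) (x @ y) w" by (rule simn_between[OF sxy _ Suc.prems(2)])
  have "comparable_to_class (x @ y)"
    using comparable_to_class_delete_letter[OF Suc.prems(3,4) w h] list_emb_length[OF sxy]
      assms(5) by simp
  moreover have "simn n (x @ y) v"
    using simn_trans[OF simn_mono[OF h] Suc.prems(4)] le_m by simp
  moreover have "simn (Suc m) s (x @ y)" using simn_trans[OF Suc.prems(2) simn_sym[OF h]] .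
  ultimately show ?case using Suc.hyps(1)[of "x @ y"] Suc.hyps(2) w sxy by simp
qed

text \<open>Comparability of u' with the whole class would propagate to u (upward or downward,
  depending on how u and u' compare), but u is incomparable with v.\<close>
lemma exists_incomparable_in_class:
  assumes uv: "simn n u v" "incomparable u v" and uu': "simn (Suc m) u u'" "m < length u"
  shows "\<exists>z. simn n z v \<and> incomparable u' z"
proof (rule ccontr)
  assume "\<nexists>z. simn n z v \<and> incomparable u' z"
  then have K': "comparable_to_class u'"
    unfolding comparable_to_class_def incomparable_def by blast
  have "simn n u u'" using simn_mono[OF uu'(1)] le_m by simp
  then have u'v: "simn n u' v" using simn_trans[OF simn_sym uv(1)] by blast
  have "m < length u'" using simn_length_ge[OF uu'(1)] uu'(2) by simp
  have "comparable_to_class u"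
  proof (cases "subseq u' u")
    case True
    then show ?thesis
      using comparable_to_class_upward[OF K' u'v \<open>m < length u'\<close> uv(1)] list_emb_length by blast
  next
    case False
    then have "subseq u u'" using K' uv(1) unfolding comparable_to_class_def by blast
    then show ?thesis by (rule comparable_to_class_downward[OF _ uu'(1) K' u'v uu'(2)])
  qed
  then have "subseq v u \<or> subseq u v" unfolding comparable_to_class_def by simp
  then show False using uv(2) unfolding incomparable_def by blast
qed

lemma exists_incomparable_superword:
  assumes t: "subseq t u" "length t \<le> n" "\<not> subseq t v"
    and "m < length v" "simn (Suc m) u u'"
  obtains v' where "simn n v' v" "incomparable u' v'"
proof -
  have "length v \<le> length v + length u' + 1" by simp
  then obtain v' where v': "subseq v v'" "length v' = length v + length u' + 1" "simn n v' v"
    by (rule obtain_simn_superword[OF assms(4)])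
  have "subseq t u'" using simnD[OF assms(5) _ t(1)] t(2) le_m by simp
  have "\<not> subseq u' v'"
  proof
    assume "subseq u' v'"
    then have "subseq t v'" using \<open>subseq t u'\<close> subseq_order.trans by blast
    then show False using simnD[OF v'(3) t(2)] t(3) by simp
  qed
  moreover have "\<not> subseq v' u'" using v'(2) by simp
  ultimately show thesis using v'(3) by (intro that) (simp_all add: incomparable_def)
qed

lemma exists_incomparable_long:
  assumes uv: "incomparable u v" and uu': "simn (Suc m) u u'"
    and long: "m < length u" "m < length v"
  obtains v' where "simn n v' v" "incomparable u' v'"
proof (cases "\<exists>t. length t \<le> n \<and> subseq t u \<and> \<not> subseq t v")
  case True
  then obtain t where "subseq t u" "length t \<le> n" "\<not> subseq t v" by blast
  from this long(2) uu' show thesis by (rule exists_incomparable_superword) (rule that)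
next
  case False
  obtain \<mu> where \<mu>: "subseq \<mu> v" "simn n \<mu> v" "length \<mu> \<le> m"
    using short_representative[of v] by (rule has_short_simn_subwordE)
  show thesis
  proof (cases "subseq \<mu> u")
    case True
    have "simn n u v" by (rule simn_squeeze[OF _ True \<mu>(2)]) (use False in blast)
    then show thesis using exists_incomparable_in_class[OF _ uv uu' long(1)] that by blast
  next
    case False
    then have "incomparable u' \<mu>"
      using simn_incomparable[OF uu'] \<mu>(3) simn_length_ge[OF uu'] long(1) by simp
    then show thesis using \<mu>(2) that by blast
  qed
qed

lemma incomparable_transfer:
  assumes L: "PT n L" "v \<in> L" and uv: "incomparable u v" and uu': "simn (Suc m) u u'"
  shows "\<exists>v'\<in>L. incomparable u' v'"
proof -
  have class_in_L: "z \<in> L" if "simn n z v" for z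
    using L that unfolding PT_def by blast
  consider "length u \<le> m" | "m < length u" "length v \<le> Suc m" | "m < length u" "m < length v"
    by linarith
  then show ?thesis
  proof cases
    case 1
    then have "u' = u" using simn_short_eq[OF uu'] by simp
    then show ?thesis using L(2) uv by blast
  next
    case 2
    then have "incomparable u' v"
      using simn_incomparable[OF uu' 2(2)] simn_length_ge[OF uu'] uv
      by (simp add: incomparable_def)
    then show ?thesis using L(2) by blast
  next
    case 3
    obtain v' where "simn n v' v" "incomparable u' v'"
      by (rule exists_incomparable_long[OF uv uu' 3])
    then show ?thesis using class_in_L by blast
  qed
qed

end

theorem theorem20:
  fixes L :: "('a::finite) list set" and k n :: nat
  assumes "card (UNIV :: 'a set) = k"
    and "PT n L"
  shows "PT (f k n + 1) (Inc L)"
proof -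
  have "1 \<le> k" using assms(1) finite_UNIV card_gt_0_iff[of "UNIV :: 'a set"] by simp
  have short_reps: "has_short_simn_subword n (f k n) z" for z :: "'a list"
    using has_short_simn_subword_card[of UNIV k z n] assms(1) \<open>1 \<le> k\<close>
    by (simp add: rep_bound_def)
  have transfer: "u' \<in> Inc L" if uu': "simn (f k n + 1) u u'" and u: "u \<in> Inc L"
    for u u' :: "'a list"
  proof -
    obtain v where v: "v \<in> L" "incomparable u v" using u unfolding Inc_def by blast
    interpret short_representatives n "f k n" v
      using short_reps self_le_f[OF \<open>1 \<le> k\<close>] by unfold_locales
    show ?thesis
      using incomparable_transfer[OF assms(2) v] uu' unfolding Inc_def by simp
  qed
  show ?thesis unfolding PT_def using transfer simn_sym by blast
qed

end
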